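(* Let $n>1$ be an integer and $a$ an indeterminate. Then $$ \sum_{k=0}^{n-1}[4k-1]_{q^2}[4k-1]^2\frac{(q^{-2};q^4)_k^2(q^{-2}/a;q^4)_k(aq^{-2};q^4)_k} {(q^4;q^4)_k^2(q^4/a;q^4)_k(aq^4;q^4)_k}q^{4k} =q(q^{2n}+1)^2[n]_{q^2}^2{2n\brack n}_{q^2}^2 \frac{(1-q^{-2})^2(q^6/a;q^4)_{n-2}(aq^6;q^4)_{n-2}\,f_n(a,q)} {(1-q^{4n-2})^2(-q^2;q^2)_n^4(aq^4;q^4)_{n-1}(q^4/a;q^4)_{n-1}}, $$ where $$ \begin{aligned} f_n(a,q)&=2+2\sum_{i=1}^{4n-6}i\,(q^i+q^{8n-6-i}) -\frac{(a^2+1)(q^{8n-5}-2q^{4n-1}+2q^{4n-2}-2q^{4n-3}+q)}{a(q-1)^2}\\ &\quad+(8n-10)q^{4n-4}(1+q^2)+(8n-11)q^{4n-5}(1+q^4)+(8n-8)q^{4n-3}+2q^{8n-6}. \end{aligned} $$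
   Context: $q$ is an indeterminate. For an integer $m$, $[m]=[m]_q=(1-q^m)/(1-q)$ and $[m]_{q^2}=(1-q^{2m})/(1-q^2)$. The $q$-shifted factorial is $(x;q)_0=1$ and $(x;q)_k=(1-x)(1-xq)\cdots(1-xq^{k-1})$ for $k\ge1$. The $q$-binomial coefficient is ${N\brack k}_q=\frac{(q;q)_N}{(q;q)_k(q;q)_{N-k}}$ for $0\le k\le N$ and $0$ otherwise; ${N\brack k}_{q^2}$ is the same with $q$ replaced by $q^2$. The identity is an identity of rational functions in $q$ and $a$. *)

theory Defs
  imports Main
begin

definition qpoch :: "'a::field \<Rightarrow> 'a \<Rightarrow> nat \<Rightarrow> 'a" where
  "qpoch x q k = (\<Prod>i<k. (1 - x * q ^ i))"

definition qint :: "'a::field \<Rightarrow> int \<Rightarrow> 'a" where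
  "qint q m = (1 - q powi m) / (1 - q)"

definition qbinom :: "'a::field \<Rightarrow> nat \<Rightarrow> nat \<Rightarrow> 'a" where
  "qbinom q N k = (if k \<le> N then qpoch q q N / (qpoch q q k * qpoch q q (N - k)) else 0)"

definition fpoly :: "nat \<Rightarrow> 'a::field \<Rightarrow> 'a \<Rightarrow> 'a" where
  "fpoly n a q =
     2 + 2 * (\<Sum>i = 1..4*n-6. of_nat i * (q ^ i + q ^ (8*n-6-i)))
     - (a^2 + 1) * (q ^ (8*n-5) - 2 * q ^ (4*n-1) + 2 * q ^ (4*n-2) - 2 * q ^ (4*n-3) + q)
         / (a * (q - 1)^2)
     + of_nat (8*n-10) * q ^ (4*n-4) * (1 + q^2)
     + of_nat (8*n-11) * q ^ (4*n-5) * (1 + q^4)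
     + of_nat (8*n-8) * q ^ (4*n-3)
     + 2 * q ^ (8*n-6)"

end

theory Submission
  imports Defs
begin

text \<open>Write \<open>t(k)\<close> for the summand and \<open>R(n)\<close> for the right-hand side without its factor
  \<open>f\<^sub>n(a,q)\<close>. Both are \<open>q\<close>-hypergeometric in \<open>n\<close>: \<open>t(n+1)/t(n)\<close>, \<open>R(n+1)/R(n)\<close> and (by induction from
  \<open>n = 2\<close>) \<open>t(n)/R(n)\<close> are rational functions of \<open>X = q\<^sup>4\<^sup>n\<close>, while \<open>a q\<^sup>6 (1 - q)\<^sup>2 f\<^sub>n(a,q)\<close> is a
  polynomial in \<open>X\<close> and \<open>n\<close>. Hence the telescoping step \<open>R(n) f\<^sub>n + t(n) = R(n+1) f\<^sub>n\<^sub>+\<^sub>1\<close> is one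
  polynomial identity in \<open>q, a, X, n\<close>, and the induction on \<open>n\<close> starts from a direct evaluation
  at \<open>n = 2\<close>.\<close>

lemma qpoch_0 [simp]: "qpoch x q 0 = 1"
  by (simp add: qpoch_def)

lemma qpoch_Suc: "qpoch x q (Suc k) = qpoch x q k * (1 - x * q ^ k)"
  by (simp add: qpoch_def)

lemma qpoch_nonzero: "(\<And>i. i < k \<Longrightarrow> 1 - x * q ^ i \<noteq> 0) \<Longrightarrow> qpoch x q k \<noteq> (0::'a::field)"
  unfolding qpoch_def by (simp add: prod_zero_iff)

lemma qbinom_central_Suc:
  fixes p :: "'a::field"
  shows "qbinom p (2 * Suc n) (Suc n)
    = qbinom p (2 * n) n * ((1 - p ^ Suc (2 * n)) * (1 - p ^ Suc (Suc (2 * n))) / (1 - p ^ Suc n) ^ 2)"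
proof -
  have "2 * Suc n = Suc (Suc (2 * n))" "2 * Suc n - Suc n = Suc n" "2 * n - n = n"
    by simp_all
  then show ?thesis
    unfolding qbinom_def by (simp add: qpoch_Suc power2_eq_square mult_ac)
qed

lemma sum_of_nat_mult_power:
  fixes x :: "'a::field"
  shows "(1 - x)^2 * (\<Sum>i=1..m. of_nat i * x^i) = x - of_nat (m+1) * x^(m+1) + of_nat m * x^(m+2)"
proof (induction m)
  case 0
  then show ?case by (simp add: power2_eq_square algebra_simps)
next
  case (Suc m)
  have "(1-x)^2 * (\<Sum>i=1..Suc m. of_nat i * x^i)
      = (1-x)^2 * (\<Sum>i=1..m. of_nat i * x^i) + (1-x)^2 * (of_nat (Suc m) * x^(Suc m))"
    by (simp add: algebra_simps)
  also have "\<dots> = x - of_nat (m+1) * x^(m+1) + of_nat m * x^(m+2) + (1-x)^2 * (of_nat (Suc m) * x^(Suc m))"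
    using Suc by simp
  also have "\<dots> = x - of_nat (Suc m+1) * x^(Suc m+1) + of_nat (Suc m) * x^(Suc m+2)"
    by (simp add: power2_eq_square algebra_simps)
  finally show ?case .
qed

lemma sum_of_nat_mult_symmetric_powers:
  fixes q :: "'a::field"
  assumes "q \<noteq> 0" "q \<noteq> 1"
  shows "(\<Sum>i=1..m. of_nat i * (q^i + q^(2*m+6-i)))
    = (q - of_nat (m+1) * q^(m+1) + of_nat m * q^(m+2)) / (1-q)^2
      + q^(2*m+6) * ((inverse q - of_nat (m+1) * inverse q^(m+1) + of_nat m * inverse q^(m+2))
                     / (1 - inverse q)^2)"
proof -
  have q1: "1 - q \<noteq> 0" "1 - inverse q \<noteq> 0"
    using assms by (auto simp: field_simps)
  have "(\<Sum>i=1..m. of_nat i * (q^i + q^(2*m+6-i)))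
      = (\<Sum>i=1..m. of_nat i * q^i + q^(2*m+6) * (of_nat i * inverse q^i))"
  proof (rule sum.cong)
    fix i assume "i \<in> {1..m}"
    then have "q^(2*m+6-i) = q^(2*m+6) * inverse q^i"
      using assms(1) by (simp add: power_diff divide_inverse power_inverse)
    then show "of_nat i * (q^i + q^(2*m+6-i)) = of_nat i * q^i + q^(2*m+6) * (of_nat i * inverse q^i)"
      by (simp add: algebra_simps)
  qed simp
  also have "\<dots> = (\<Sum>i=1..m. of_nat i * q^i) + q^(2*m+6) * (\<Sum>i=1..m. of_nat i * inverse q^i)"
    by (simp add: sum.distrib sum_distrib_left)
  also have "(\<Sum>i=1..m. of_nat i * q^i) = (q - of_nat (m+1) * q^(m+1) + of_nat m * q^(m+2)) / (1-q)^2"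
    using sum_of_nat_mult_power[of q m] q1 by (simp add: field_simps)
  also have "(\<Sum>i=1..m. of_nat i * inverse q^i)
      = (inverse q - of_nat (m+1) * inverse q^(m+1) + of_nat m * inverse q^(m+2)) / (1 - inverse q)^2"
    using sum_of_nat_mult_power[of "inverse q" m] q1 by (simp add: field_simps)
  finally show ?thesis .
qed

text \<open>Clearing denominators in \<open>f\<^sub>n(a,q)\<close>: with \<open>X = q\<^sup>4\<^sup>n\<close> and \<open>N = n\<close>,
  \<open>a q\<^sup>6 (1 - q)\<^sup>2 f\<^sub>n(a,q) = f_numerator q a X N\<close>.\<close>
definition f_numerator :: "'a::field \<Rightarrow> 'a \<Rightarrow> 'a \<Rightarrow> 'a \<Rightarrow> 'a" where
  "f_numerator q a X N = 2*a*q^6*(1-q)^2 + 2*a*q*(q^6-(4*N-5)*X+(4*N-6)*X*q)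
     + 2*a*q*X*(X-(4*N-5)*q^6+(4*N-6)*q^5)
     - (a*a+1)*q*(X^2-2*X*q^4+2*X*q^3-2*X*q^2+q^6) + (8*N-10)*a*X*q^2*(1+q^2)*(1-q)^2
     + (8*N-11)*a*X*q*(1+q^4)*(1-q)^2 + (8*N-8)*a*X*q^3*(1-q)^2 + 2*a*X^2*(1-q)^2"

lemma fpoly_eq_f_numerator:
  fixes q a :: "'a::field_char_0"
  assumes "q \<noteq> 0" "a \<noteq> 0" "q \<noteq> 1" "n \<ge> 2"
  shows "fpoly n a q = f_numerator q a (q^(4*n)) (of_nat n) / (a*q^6*(1-q)^2)"
proof -
  define X where "X = q^(4*n)"
  define N where "N = (of_nat n :: 'a)"
  have X0: "X \<noteq> 0" using assms by (simp add: X_def)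
  have q1: "1 - q \<noteq> 0" "q - 1 \<noteq> 0" "1 - inverse q \<noteq> 0"
    using assms by (auto simp: field_simps)
  have X2: "q^(8*n) = X^2"
    by (simp add: X_def power_mult[symmetric] mult.commute)
  have e: "2*(4*n-6)+6 = 8*n-6" "4*n-6+1 = 4*n-5" "4*n-6+2 = 4*n-4"
    using assms(4) by auto
  have pX: "q^(4*n-k) = X/q^k" if "k \<le> 4*n" for k
    using that assms(1) by (simp add: X_def power_diff)
  have pX2: "q^(8*n-k) = X^2/q^k" if "k \<le> 8*n" for k
    using that assms(1) by (simp add: X2 power_diff)
  have p: "q^(4*n-5) = X/q^5" "q^(4*n-4) = X/q^4" "inverse q^(4*n-5) = q^5/X" "inverse q^(4*n-4) = q^4/X"
    "q^(8*n-6) = X^2/q^6" "q^(8*n-5) = X^2/q^5" "q^(4*n-1) = X/q" "q^(4*n-2) = X/q^2" "q^(4*n-3) = X/q^3"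
    using assms(4) by (simp_all add: pX pX2 power_inverse)
  have N: "of_nat (4*n-5) = 4*N-5" "of_nat (4*n-6) = 4*N-6" "of_nat (8*n-10) = 8*N-10"
    "of_nat (8*n-11) = 8*N-11" "of_nat (8*n-8) = (8*N-8::'a)"
    using assms(4) by (simp_all add: N_def of_nat_diff)
  have "fpoly n a q = 2 + 2*((q - (4*N-5)*(X/q^5) + (4*N-6)*(X/q^4))/(1-q)^2
        + X^2/q^6 * ((inverse q - (4*N-5)*(q^5/X) + (4*N-6)*(q^4/X))/(1-inverse q)^2))
     - (a^2+1)*(X^2/q^5 - 2*(X/q) + 2*(X/q^2) - 2*(X/q^3) + q)/(a*(q-1)^2)
     + (8*N-10)*(X/q^4)*(1+q^2) + (8*N-11)*(X/q^5)*(1+q^4) + (8*N-8)*(X/q^3) + 2*(X^2/q^6)"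
    unfolding fpoly_def sum_of_nat_mult_symmetric_powers[OF assms(1,3), of "4*n-6", unfolded e]
    unfolding p N ..
  also have "\<dots> = f_numerator q a X N / (a*q^6*(1-q)^2)"
    using assms X0 q1 unfolding f_numerator_def by (simp add: field_simps) algebra
  finally show ?thesis by (simp add: X_def N_def)
qed

definition summand :: "'a::field \<Rightarrow> 'a \<Rightarrow> nat \<Rightarrow> 'a" where
  "summand q a k = qint (q^2) (4 * int k - 1) * (qint q (4 * int k - 1))^2
            * (qpoch (inverse (q^2)) (q^4) k)^2 * qpoch (inverse (q^2) / a) (q^4) k
            * qpoch (a * inverse (q^2)) (q^4) k
            / ((qpoch (q^4) (q^4) k)^2 * qpoch (q^4 / a) (q^4) k * qpoch (a * q^4) (q^4) k)
            * q ^ (4 * k)"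

definition rhs_prefactor :: "'a::field \<Rightarrow> 'a \<Rightarrow> nat \<Rightarrow> 'a" where
  "rhs_prefactor q a n = q * (q ^ (2 * n) + 1)^2 * (qint (q^2) (int n))^2 * (qbinom (q^2) (2 * n) n)^2
           * ((1 - inverse (q^2))^2 * qpoch (q^6 / a) (q^4) (n - 2) * qpoch (a * q^6) (q^4) (n - 2))
           / ((1 - q ^ (4 * n - 2))^2 * (qpoch (- (q^2)) (q^2) n)^4 * qpoch (a * q^4) (q^4) (n - 1)
              * qpoch (q^4 / a) (q^4) (n - 1))"

text \<open>The three quotients below are rational functions of \<open>X = q\<^sup>4\<^sup>n\<close>: \<open>summand_ratio\<close> is
  \<open>summand (n+1) / summand n\<close>, \<open>rhs_prefactor_ratio\<close> is \<open>rhs_prefactor (n+1) / rhs_prefactor n\<close>,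
  and \<open>summand_over_prefactor\<close> is \<open>summand n / rhs_prefactor n\<close>.\<close>
definition summand_ratio :: "'a::field \<Rightarrow> 'a \<Rightarrow> 'a \<Rightarrow> 'a" where
  "summand_ratio q a X = (1-q^6*X^2)*(1-q^3*X)^2*(q*q-X)^2*(a*q*q-X)*(q*q-a*X)
     / ((q*q-X*X)*(q-X)^2*(1-q^4*X)^2*(a-q^4*X)*(1-a*q^4*X))"

definition rhs_prefactor_ratio :: "'a::field \<Rightarrow> 'a \<Rightarrow> 'a \<Rightarrow> 'a" where
  "rhs_prefactor_ratio q a X = (q*q-X)^2*(a*q*q-X)*(q*q-a*X)/(q^8*(1-X)^2*(a-X)*(1-a*X))"

definition summand_over_prefactor :: "'a::field \<Rightarrow> 'a \<Rightarrow> 'a \<Rightarrow> 'a" where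
  "summand_over_prefactor q a X = X*(q*q-X*X)*(q-X)^2*(1-q*q)*(a*q*q-1)*(a-q*q)*(q*q-a)*(1-a*q*q)*q^5
     / (q^8*(1-X)^2*(a-X)*(1-a*X)*(a*q^6*(1-q)^2))"

lemma f_numerator_shift:
  fixes q a X N :: "'a::field"
  shows "(q*q-X)^2*(a*q*q-X)*(q*q-a*X) * f_numerator q a (X*q^4) (N+1)
      - q^8*(1-X)^2*(a-X)*(1-a*X) * f_numerator q a X N
    = X*(q*q-X*X)*(q-X)^2*(1-q*q)*(a*q*q-1)*(a-q*q)*(q*q-a)*(1-a*q*q)*q^5"
  unfolding f_numerator_def by algebra

lemma f_numerator_recurrence:
  fixes q a X N :: "'a::field"
  assumes "q \<noteq> 0" "a \<noteq> 0" "1 - q \<noteq> 0" "1 - X \<noteq> 0" "a - X \<noteq> 0" "1 - a*X \<noteq> 0"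
  shows "f_numerator q a X N / (a*q^6*(1-q)^2) + summand_over_prefactor q a X
    = rhs_prefactor_ratio q a X * (f_numerator q a (X*q^4) (N+1) / (a*q^6*(1-q)^2))"
proof -
  define D where "D = a*q^6*(1-q)^2"
  define K where "K = q^8*(1-X)^2*(a-X)*(1-a*X)"
  define P where "P = (q*q-X)^2*(a*q*q-X)*(q*q-a*X)"
  define G where "G = f_numerator q a X N"
  define G' where "G' = f_numerator q a (X*q^4) (N+1)"
  define R where "R = X*(q*q-X*X)*(q-X)^2*(1-q*q)*(a*q*q-1)*(a-q*q)*(q*q-a)*(1-a*q*q)*q^5"
  have K0: "K \<noteq> 0" using assms by (auto simp: K_def)
  have shift: "P*G' - K*G = R"
    unfolding P_def G'_def K_def G_def R_def by (rule f_numerator_shift)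
  have "rhs_prefactor_ratio q a X * (G' / D) = (P*G')/(K*D)"
    unfolding rhs_prefactor_ratio_def P_def K_def by simp
  also have "\<dots> = (K*G)/(K*D) + R/(K*D)"
    unfolding shift[symmetric] by (simp add: diff_divide_distrib)
  also have "\<dots> = G / D + summand_over_prefactor q a X"
    using K0 unfolding summand_over_prefactor_def R_def K_def D_def by simp
  finally show ?thesis unfolding D_def G_def G'_def by simp
qed

lemma summand_over_prefactor_shift:
  fixes q a X :: "'a::field"
  assumes "q \<noteq> 0" "a \<noteq> 0" "1-q \<noteq> 0" "1-X \<noteq> 0" "a-X \<noteq> 0" "1-a*X \<noteq> 0" "q*q-X*X \<noteq> 0" "q-X \<noteq> 0"
    "1-q^4*X \<noteq> 0" "a-q^4*X \<noteq> 0" "1-a*q^4*X \<noteq> 0"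
  shows "summand_over_prefactor q a X * summand_ratio q a X
    = rhs_prefactor_ratio q a X * summand_over_prefactor q a (X*q^4)"
proof -
  have r1: "q*q-(X*q^4)*(X*q^4) = q^2*(1-q^6*X^2)" by algebra
  have r2: "q-X*q^4 = q*(1-q^3*X)" by algebra
  have r3: "1-X*q^4 = 1-q^4*X" "a-X*q^4 = a-q^4*X" "1-a*(X*q^4) = 1-a*q^4*X"
    by (simp_all add: mult_ac)
  define K0 where "K0 = (1-q*q)*(a*q*q-1)*(a-q*q)*(q*q-a)*(1-a*q*q)*q^5"
  define A where "A = q*q-X*X"
  define B where "B = q-X"
  define C where "C = 1-q^6*X^2"
  define E where "E = 1-q^3*X"
  define F where "F = q*q-X"
  define G where "G = a*q*q-X"
  define H where "H = q*q-a*X"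
  define I where "I = 1-X"
  define J where "J = a-X"
  define L where "L = 1-a*X"
  define M where "M = 1-q^4*X"
  define N where "N = a-q^4*X"
  define W where "W = 1-a*q^4*X"
  define D where "D = a*q^6*(1-q)^2"
  have nz: "A \<noteq> 0" "B \<noteq> 0" "I \<noteq> 0" "J \<noteq> 0" "L \<noteq> 0" "M \<noteq> 0" "N \<noteq> 0" "W \<noteq> 0" "D \<noteq> 0"
    using assms by (simp_all add: A_def B_def I_def J_def L_def M_def N_def W_def D_def)
  have t1: "summand_over_prefactor q a X = X*A*B^2*K0/(q^8*I^2*J*L*D)"
    unfolding summand_over_prefactor_def K0_def A_def B_def I_def J_def L_def D_def by (simp add: mult_ac)
  have t2: "summand_over_prefactor q a (X*q^4) = X*q^4*(q^2*C)*(q*E)^2*K0/(q^8*M^2*N*W*D)"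
    unfolding summand_over_prefactor_def r1 r2 r3 K0_def C_def E_def M_def N_def W_def D_def
    by (simp add: mult_ac)
  have t3: "rhs_prefactor_ratio q a X = F^2*G*H/(q^8*I^2*J*L)"
    unfolding rhs_prefactor_ratio_def F_def G_def H_def I_def J_def L_def by simp
  have t4: "summand_ratio q a X = C*E^2*F^2*G*H/(A*B^2*M^2*N*W)"
    unfolding summand_ratio_def C_def E_def F_def G_def H_def A_def B_def M_def N_def W_def by simp
  show ?thesis unfolding t1 t2 t3 t4 using nz assms(1)
    by (simp add: field_simps)
qed

lemma power_4n_shifts:
  fixes q :: "'a::field"
  assumes "q \<noteq> 0" "n \<ge> 1"
  defines "X \<equiv> q^(4*n)"
  shows "(q^2)^(4*n+3) = q^6*X^2" "(q^2)^(4*n-1) = X^2/q^2" "q^(4*n+3) = q^3*X" "q^(4*n-1) = X/q"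
    "(q^4)^n = X" "q^(4*Suc n) = X*q^4"
proof -
  have e: "2*(4*n+3) = 6 + 4*n + 4*n" "2*(4*n-1) = 4*n + 4*n - 2" using assms(2) by simp_all
  show "(q^2)^(4*n+3) = q^6*X^2" "(q^2)^(4*n-1) = X^2/q^2"
    unfolding power_mult[symmetric] e X_def using assms(1,2)
    by (simp_all add: power_add power_diff power2_eq_square)
  show "q^(4*n-1) = X/q"
    unfolding X_def using assms(1,2) by (simp add: power_diff)
  show "q^(4*n+3) = q^3*X" "(q^4)^n = X" "q^(4*Suc n) = X*q^4"
    unfolding X_def by (simp_all add: power_mult[symmetric] power_add mult_ac)
qed

lemma rhs_prefactor_numerator_Suc:
  fixes q a :: "'a::field"
  assumes "q \<noteq> 0" "a \<noteq> 0" "n \<ge> 2"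
  defines "Y \<equiv> q^(2*n)"
  shows "(1 - inverse (q^2))^2 * qpoch (q^6 / a) (q^4) (Suc n - 2) * qpoch (a * q^6) (q^4) (Suc n - 2)
     = (1 - inverse (q^2))^2 * qpoch (q^6 / a) (q^4) (n - 2) * qpoch (a * q^6) (q^4) (n - 2)
       * ((a*q^2-Y^2)*(q^2-a*Y^2)/(a*q^4))"
proof -
  have s: "Suc n - 2 = Suc (n-2)" using assms(3) by simp
  have n2: "n - 2 + 2 = n" using assms(3) by simp
  have "(q^4)^(n-2) * q^8 = (q^4)^(n-2+2)" by (simp add: power_add)
  also have "\<dots> = Y^2" unfolding n2 Y_def by (simp add: power_mult[symmetric] mult.commute mult.left_commute)
  finally have p: "(q^4)^(n-2) = Y^2/q^8" using assms(1) by (simp add: field_simps)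
  have f: "(1 - q^6/a*(Y^2/q^8)) * (1 - a*q^6*(Y^2/q^8)) = (a*q^2-Y^2)*(q^2-a*Y^2)/(a*q^4)"
    using assms(1,2) by (simp add: field_simps)
  show ?thesis unfolding s qpoch_Suc p f[symmetric] by (simp add: mult_ac)
qed

lemma rhs_prefactor_denominator_Suc:
  fixes q a :: "'a::field"
  assumes "q \<noteq> 0" "a \<noteq> 0" "n \<ge> 2"
  defines "Y \<equiv> q^(2*n)"
  assumes "q^2 - Y^2 \<noteq> 0"
  shows "(1 - q ^ (4 * Suc n - 2))^2 * (qpoch (- (q^2)) (q^2) (Suc n))^4 * qpoch (a * q^4) (q^4) (Suc n - 1)
              * qpoch (q^4 / a) (q^4) (Suc n - 1)
     = (1 - q ^ (4 * n - 2))^2 * (qpoch (- (q^2)) (q^2) n)^4 * qpoch (a * q^4) (q^4) (n - 1)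
              * qpoch (q^4 / a) (q^4) (n - 1)
       * ((1-q^2*Y^2)^2*q^4*(1+q^2*Y)^4*(1-a*Y^2)*(a-Y^2)/((q^2-Y^2)^2*a))"
proof -
  have XY: "q^(4*n) = Y^2" "(q^2)^n = Y" "(q^4)^n = Y^2" unfolding Y_def
    by (simp_all add: power_mult[symmetric] mult.commute mult.left_commute)
  have s: "Suc n - 1 = Suc (n-1)" using assms(3) by simp
  have "(q^4)^(n-1) * q^4 = (q^4)^(n-1+1)" by (simp add: power_add)
  also have "\<dots> = Y^2" using assms(3) XY by simp
  finally have p: "(q^4)^(n-1) = Y^2/q^4" using assms(1) by (simp add: field_simps)
  have c1: "q ^ (4 * Suc n - 2) = q^2*Y^2" using XY by (simp add: power_add power2_eq_square mult.assoc)
  have "4*n-2+2 = 4*n" using assms(3) by simp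
  then have "q^(4*n-2) * q^2 = Y^2" using XY by (metis power_add)
  then have c2: "q ^ (4 * n - 2) = Y^2/q^2" using assms(1) by (simp add: field_simps)
  have f1: "1 - - (q^2) * Y = 1 + q^2*Y" by simp
  have f2: "1 - a*q^4*(Y^2/q^4) = 1 - a*Y^2" using assms(1) by simp
  have f3: "1 - q^4/a*(Y^2/q^4) = (a-Y^2)/a" using assms(1,2) by (simp add: field_simps)
  have "1 - Y^2/q^2 = (q^2-Y^2)/q^2" using assms(1) by (simp add: field_simps)
  then have f4: "(1 - Y^2/q^2)^2 = (q^2-Y^2)^2/q^4" by (simp add: power_divide power_mult[symmetric])
  have f5: "(1-q^2*Y^2)^2 = (q^2-Y^2)^2/q^4 * ((1-q^2*Y^2)^2*q^4/(q^2-Y^2)^2)"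
    using assms(1,5) by simp
  show ?thesis unfolding s qpoch_Suc p c1 c2 XY f1 f2 f3 f4
    by (subst f5) (simp add: mult_ac power_mult_distrib divide_inverse)
qed

locale generic_qa =
  fixes q a :: "'a::field_char_0"
  assumes q_nonzero: "q \<noteq> 0" and q_not_root_of_unity: "\<And>m::nat. m \<ge> 1 \<Longrightarrow> q ^ m \<noteq> 1"
    and a_nonzero: "a \<noteq> 0" and a_not_q_power: "\<And>j::nat. a \<noteq> q ^ j"
    and a_not_inverse_q_power: "\<And>j::nat. a * q ^ j \<noteq> 1"
begin

lemma one_minus_q_power_nonzero: "m \<ge> 1 \<Longrightarrow> 1 - q^m \<noteq> 0"
  using q_not_root_of_unity by force

lemma one_plus_q_power_nonzero: "m \<ge> 1 \<Longrightarrow> 1 + q^m \<noteq> 0"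
proof
  assume "m \<ge> 1" "1 + q^m = 0"
  then have "q^m = -1" by (simp add: algebra_simps eq_neg_iff_add_eq_0)
  then have "q^(2*m) = 1" by (simp add: power_mult mult.commute[of 2])
  then show False using q_not_root_of_unity[of "2*m"] \<open>m \<ge> 1\<close> by simp
qed

lemma one_minus_a_q_power_nonzero: "1 - a*q^j \<noteq> 0"
  using a_not_inverse_q_power[of j] by simp

lemma one_minus_q_power_div_a_nonzero: "1 - q^j/a \<noteq> 0"
  using a_not_q_power[of j] a_nonzero by (auto simp: field_simps)

lemma a_minus_q_power_nonzero: "a - q^j \<noteq> 0"
  using a_not_q_power[of j] by simp

lemma q_power_2n_factors_nonzero:
  assumes "n \<ge> 2"
  defines "Y \<equiv> q^(2*n)"
  shows "1 - Y \<noteq> 0" "Y + 1 \<noteq> 0" "1 - q^2*Y \<noteq> 0" "1 + q^2*Y \<noteq> 0" "1 - Y^2 \<noteq> 0"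
    "1 - q^2*Y^2 \<noteq> 0" "q^2 - Y^2 \<noteq> 0" "1 - a*Y^2 \<noteq> 0" "a - Y^2 \<noteq> 0"
proof -
  have XY: "q^(4*n) = Y^2" unfolding Y_def by (simp add: power_mult[symmetric] mult.commute)
  show "1 - Y \<noteq> 0" "Y + 1 \<noteq> 0"
    unfolding Y_def using one_minus_q_power_nonzero[of "2*n"] one_plus_q_power_nonzero[of "2*n"] assms(1)
    by (simp_all add: add.commute)
  show "1 - q^2*Y \<noteq> 0" "1 + q^2*Y \<noteq> 0"
    unfolding Y_def using one_minus_q_power_nonzero[of "2+2*n"] one_plus_q_power_nonzero[of "2+2*n"]
    by (simp_all add: power_add power2_eq_square mult.assoc)
  show "1 - Y^2 \<noteq> 0" using one_minus_q_power_nonzero[of "4*n"] assms(1) XY by simp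
  show "1 - q^2*Y^2 \<noteq> 0" using one_minus_q_power_nonzero[of "2+4*n"] XY by (simp add: power_add power2_eq_square mult.assoc)
  have "4*n-2+2 = 4*n" using assms(1) by simp
  then have "q^(4*n-2) * q^2 = Y^2" using XY by (metis power_add)
  then have "q^2 - Y^2 = q^2*(1 - q^(4*n-2))" by (simp add: algebra_simps)
  then show "q^2 - Y^2 \<noteq> 0" using one_minus_q_power_nonzero[of "4*n-2"] assms(1) q_nonzero by simp
  show "1 - a*Y^2 \<noteq> 0" "a - Y^2 \<noteq> 0"
    using one_minus_a_q_power_nonzero[of "4*n"] a_minus_q_power_nonzero[of "4*n"] XY by simp_all
qed

lemma q_power_4n_factors_nonzero:
  assumes "n \<ge> 1"
  defines "X \<equiv> q^(4*n)"
  shows "1 - X \<noteq> 0" "a - X \<noteq> 0" "1 - a*X \<noteq> 0" "q*q - X*X \<noteq> 0" "q - X \<noteq> 0"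
    "1 - q^4*X \<noteq> 0" "a - q^4*X \<noteq> 0" "1 - a*q^4*X \<noteq> 0"
proof -
  show "1 - X \<noteq> 0" using one_minus_q_power_nonzero[of "4*n"] assms(1) by (simp add: X_def)
  show "a - X \<noteq> 0" "1 - a*X \<noteq> 0"
    unfolding X_def by (rule a_minus_q_power_nonzero one_minus_a_q_power_nonzero)+
  show "1 - q^4*X \<noteq> 0" "a - q^4*X \<noteq> 0" "1 - a*q^4*X \<noteq> 0"
    using one_minus_q_power_nonzero[of "4+4*n"] a_minus_q_power_nonzero[of "4+4*n"]
      one_minus_a_q_power_nonzero[of "4+4*n"]
    by (simp_all add: X_def power_add mult.assoc)
  have "8*n-2+2 = 4*n+4*n" using assms(1) by simp
  then have "q^(8*n-2) * q^2 = X*X" unfolding X_def by (metis power_add)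
  then have "q*q - X*X = q^2*(1-q^(8*n-2))" by (simp add: algebra_simps power2_eq_square)
  then show "q*q - X*X \<noteq> 0" using q_nonzero one_minus_q_power_nonzero[of "8*n-2"] assms(1) by simp
  have "q^(4*n-1) * q = X" using assms(1) by (simp add: X_def flip: power_Suc2)
  then have "q - X = q*(1-q^(4*n-1))" by (simp add: algebra_simps)
  then show "q - X \<noteq> 0" using q_nonzero one_minus_q_power_nonzero[of "4*n-1"] assms(1) by simp
qed

lemma qpoch_base_q4_nonzero:
  "qpoch (q^4) (q^4) n \<noteq> 0" "qpoch (q^4 / a) (q^4) n \<noteq> 0" "qpoch (a * q^4) (q^4) n \<noteq> 0"
proof -
  have p: "q^4 * (q^4)^i = q^(4*i+4)" for i by (simp add: power_mult[symmetric] power_add mult.commute)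
  show "qpoch (q^4) (q^4) n \<noteq> 0"
    by (rule qpoch_nonzero) (use one_minus_q_power_nonzero[of "4*i+4" for i] in \<open>simp add: p\<close>)
  show "qpoch (q^4 / a) (q^4) n \<noteq> 0"
    by (rule qpoch_nonzero) (use one_minus_q_power_div_a_nonzero[of "4*i+4" for i] in \<open>simp add: p[symmetric]\<close>)
  show "qpoch (a * q^4) (q^4) n \<noteq> 0"
    by (rule qpoch_nonzero) (use one_minus_a_q_power_nonzero[of "4*i+4" for i] in \<open>simp add: p mult.assoc\<close>)
qed

lemma summand_Suc:
  assumes n: "n \<ge> 1"
  shows "summand q a (Suc n) = summand q a n * summand_ratio q a (q^(4*n))"
proof -
  define X where "X = q^(4*n)"
  note w = power_4n_shifts[OF q_nonzero n, folded X_def]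
  have i: "4 * int (Suc n) - 1 = int (4*n+3)" "4 * int n - 1 = int (4*n-1)" using n by auto
  define N1 where "N1 = qpoch (inverse (q^2)) (q^4) n"
  define N2 where "N2 = qpoch (inverse (q^2) / a) (q^4) n"
  define N3 where "N3 = qpoch (a * inverse (q^2)) (q^4) n"
  define D1 where "D1 = qpoch (q^4) (q^4) n"
  define D2 where "D2 = qpoch (q^4 / a) (q^4) n"
  define D3 where "D3 = qpoch (a * q^4) (q^4) n"
  note qpoch_abbrevs = N1_def[symmetric] N2_def[symmetric] N3_def[symmetric]
    D1_def[symmetric] D2_def[symmetric] D3_def[symmetric]
  have summand_Suc_n: "summand q a (Suc n) = (1-q^6*X^2)/(1-q^2) * ((1-q^3*X)/(1-q))^2 * (N1*(1-inverse(q^2)*X))^2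
      * (N2*(1-inverse(q^2)/a*X)) * (N3*(1-a*inverse(q^2)*X))
      / ((D1*(1-q^4*X))^2*(D2*(1-q^4/a*X))*(D3*(1-a*q^4*X))) * (X*q^4)"
    unfolding summand_def qint_def i power_int_of_nat w qpoch_Suc qpoch_abbrevs by simp
  have summand_n: "summand q a n = (1-X^2/q^2)/(1-q^2) * ((1-X/q)/(1-q))^2 * N1^2*N2*N3/(D1^2*D2*D3) * X"
    unfolding summand_def qint_def i power_int_of_nat w X_def[symmetric] qpoch_abbrevs by simp
  have nD: "D1 \<noteq> 0" "D2 \<noteq> 0" "D3 \<noteq> 0"
    unfolding D1_def D2_def D3_def by (rule qpoch_base_q4_nonzero)+
  note nX = q_power_4n_factors_nonzero[OF n, folded X_def]
  define A where "A = q*q-X*X"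
  define B where "B = q-X"
  define C where "C = 1-q^6*X^2"
  define E where "E = 1-q^3*X"
  define F where "F = q*q-X"
  define G where "G = a*q*q-X"
  define H where "H = q*q-a*X"
  define M where "M = 1-q^4*X"
  define N where "N = a-q^4*X"
  define W where "W = 1-a*q^4*X"
  define Q1 where "Q1 = 1 - q^2"
  define Q2 where "Q2 = 1 - q"
  have nz: "A \<noteq> 0" "B \<noteq> 0" "M \<noteq> 0" "N \<noteq> 0" "W \<noteq> 0" "Q1 \<noteq> 0" "Q2 \<noteq> 0"
    using nX one_minus_q_power_nonzero[of 2] one_minus_q_power_nonzero[of 1]
    by (simp_all add: A_def B_def M_def N_def W_def Q1_def Q2_def)
  have r: "1-inverse(q^2)*X = F/q^2" "1-inverse(q^2)/a*X = G/(a*q^2)" "1-a*inverse(q^2)*X = H/q^2"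
     "1-q^4/a*X = N/a" "1-X^2/q^2 = A/q^2" "1-X/q = B/q" "1-q^6*X^2 = C" "1-q^3*X = E" "1-q^4*X = M"
     "1-a*q^4*X = W"
    unfolding F_def G_def H_def N_def A_def B_def C_def E_def M_def W_def using q_nonzero a_nonzero
    by (simp_all add: field_simps power2_eq_square)
  have ratio: "summand_ratio q a X = C*E^2*F^2*G*H/(A*B^2*M^2*N*W)"
    unfolding summand_ratio_def C_def E_def F_def G_def H_def A_def B_def M_def N_def W_def by simp
  have "summand q a (Suc n) = summand q a n * summand_ratio q a X"
    unfolding summand_Suc_n summand_n r ratio Q1_def[symmetric] Q2_def[symmetric]
    using q_nonzero a_nonzero nD nz by (simp add: field_simps)
  then show ?thesis by (simp add: X_def)
qed

lemma rhs_prefactor_Suc: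
  assumes n: "n \<ge> 2"
  shows "rhs_prefactor q a (Suc n) = rhs_prefactor q a n * rhs_prefactor_ratio q a (q^(4*n))"
proof -
  define Y where "Y = q^(2*n)"
  have Yq: "(q^2)^n = Y" "(q^2)^(2*n) = Y^2" "q^(4*n) = Y^2" unfolding Y_def
    by (simp_all add: power_mult[symmetric] mult.commute mult.left_commute)
  note nY = q_power_2n_factors_nonzero[OF n, folded Y_def]
  have e1: "(q ^ (2 * Suc n) + 1)^2 = (q ^ (2 * n) + 1)^2 * ((q^2*Y+1)^2/(Y+1)^2)"
  proof -
    have "q^(2*Suc n) = q^2*Y" by (simp add: Y_def power_add power2_eq_square mult.assoc)
    then show ?thesis unfolding Y_def[symmetric] using nY by simp
  qed
  have e2: "(qint (q^2) (int (Suc n)))^2 = (qint (q^2) (int n))^2 * ((1-q^2*Y)^2/(1-Y)^2)"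
    unfolding qint_def power_int_of_nat using Yq nY by (simp add: power_divide)
  have e3: "(qbinom (q^2) (2 * Suc n) (Suc n))^2
      = (qbinom (q^2) (2 * n) n)^2 * ((1-q^2*Y^2)*(1-q^4*Y^2)/(1-q^2*Y)^2)^2"
    unfolding qbinom_central_Suc using Yq
    by (simp add: power_mult_distrib power_divide power_add[symmetric] mult.assoc)
  note e4 = rhs_prefactor_numerator_Suc[OF q_nonzero a_nonzero n, folded Y_def]
  note e5 = rhs_prefactor_denominator_Suc[OF q_nonzero a_nonzero n nY(7)[unfolded Y_def], folded Y_def]
  have regroup: "x*(f1*r1)*(f2*r2)*(f3*r3)*(f4*r4)/(f5*r5) = (x*f1*f2*f3*f4/f5) * (r1*r2*r3*r4/r5)"
    for x f1 f2 f3 f4 f5 r1 r2 r3 r4 r5 :: 'a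
    by (simp add: divide_inverse mult_ac)
  have combine: "(n1/d1)*(n2/d2)*(n3/d3)*(n4/d4)/(n5/d5) = (n1*n2*n3*n4*d5)/(d1*d2*d3*d4*n5)"
    for n1 d1 n2 d2 n3 d3 n4 d4 n5 d5 :: 'a
    by (simp add: divide_inverse mult_ac inverse_mult_distrib)
  define ratio where "ratio = ((q^2*Y+1)^2/(Y+1)^2) * ((1-q^2*Y)^2/(1-Y)^2)
     * ((1-q^2*Y^2)*(1-q^4*Y^2)/(1-q^2*Y)^2)^2 * ((a*q^2-Y^2)*(q^2-a*Y^2)/(a*q^4))
     / ((1-q^2*Y^2)^2*q^4*(1+q^2*Y)^4*(1-a*Y^2)*(a-Y^2)/((q^2-Y^2)^2*a))"
  have "rhs_prefactor q a (Suc n) = rhs_prefactor q a n * ratio"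
    unfolding ratio_def rhs_prefactor_def e1 e2 e3 e4 e5 by (rule regroup)
  moreover have "ratio = rhs_prefactor_ratio q a (q^(4*n))"
    unfolding ratio_def Yq power_divide combine rhs_prefactor_ratio_def
    apply (subst frac_eq_eq)
    using q_nonzero a_nonzero nY apply simp
    using q_nonzero a_nonzero nY apply simp
    apply algebra
    done
  ultimately show ?thesis by simp
qed

lemma summand_over_prefactor_Suc:
  assumes n: "n \<ge> 1"
  shows "summand_over_prefactor q a (q^(4*n)) * summand_ratio q a (q^(4*n))
    = rhs_prefactor_ratio q a (q^(4*n)) * summand_over_prefactor q a (q^(4*Suc n))"
  using summand_over_prefactor_shift[of q a "q^(4*n)"] q_power_4n_factors_nonzero[OF n]
    one_minus_q_power_nonzero[of 1] q_nonzero a_nonzero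
  by (simp add: power_add mult_ac)

lemma fpoly_Suc:
  assumes n: "n \<ge> 2"
  shows "fpoly n a q + summand_over_prefactor q a (q^(4*n))
    = rhs_prefactor_ratio q a (q^(4*n)) * fpoly (Suc n) a q"
proof -
  have q1: "q \<noteq> 1" "1 - q \<noteq> 0" using one_minus_q_power_nonzero[of 1] by auto
  have "fpoly n a q = f_numerator q a (q^(4*n)) (of_nat n) / (a*q^6*(1-q)^2)"
    using fpoly_eq_f_numerator[OF q_nonzero a_nonzero q1(1) n] .
  moreover have "fpoly (Suc n) a q = f_numerator q a (q^(4*n)*q^4) (of_nat n + 1) / (a*q^6*(1-q)^2)"
    using fpoly_eq_f_numerator[OF q_nonzero a_nonzero q1(1), of "Suc n"] n
    by (simp add: power_add mult_ac add.commute)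
  moreover note f_numerator_recurrence[OF q_nonzero a_nonzero q1(2), of "q^(4*n)" "of_nat n"]
  ultimately show ?thesis
    using q_power_4n_factors_nonzero[of n] n by simp
qed

lemma summand_0: "summand q a 0 = - 1/q^4"
proof -
  have p: "(q^2) powi (-1) = inverse (q^2)" "q powi (-1) = inverse q" by (simp_all add: power_int_minus)
  define u where "u = 1 - q^2"
  define v where "v = 1 - q"
  have n: "u \<noteq> 0" "v \<noteq> 0"
    using one_minus_q_power_nonzero[of 2] one_minus_q_power_nonzero[of 1] by (auto simp: u_def v_def)
  have "summand q a 0 = (1 - inverse (q^2))/u * ((1 - inverse q)/v)^2"
    unfolding summand_def qint_def p u_def v_def by simp
  also have "\<dots> = - 1/q^4"
    apply (simp add: field_simps n q_nonzero)
    apply (simp only: u_def v_def)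
    apply algebra
    done
  finally show ?thesis .
qed

lemma summand_1:
  "summand q a 1 = (1-q^6)*(1-q^3)^2*(q*q-1)^2*(a*q*q-1)*(q*q-a)
    / ((1-q*q)*(1-q)^2*q^4*(1-q^4)^2*(a-q^4)*(1-a*q^4))"
proof -
  have i: "4 * int 1 - 1 = int 3" by simp
  define u where "u = 1 - q^2"
  define v where "v = 1 - q"
  define w where "w = 1 - q^4"
  define x where "x = a - q^4"
  define y where "y = 1 - a*q^4"
  have n: "u \<noteq> 0" "v \<noteq> 0" "w \<noteq> 0" "x \<noteq> 0" "y \<noteq> 0"
    using one_minus_q_power_nonzero[of 2] one_minus_q_power_nonzero[of 1] one_minus_q_power_nonzero[of 4]
      a_minus_q_power_nonzero[of 4] one_minus_a_q_power_nonzero[of 4]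
    by (auto simp: u_def v_def w_def x_def y_def)
  have e: "1 - q^4/a = x/a" "1 - inverse (q^2)/a = (a*q*q-1)/(a*q*q)" "1 - a*inverse(q^2) = (q*q-a)/(q*q)"
    "1 - inverse(q^2) = (q*q-1)/(q*q)" "(q^2)^3 = q^6" "1 - q*q = u"
    using q_nonzero a_nonzero by (simp_all add: field_simps power2_eq_square x_def u_def)
  have "summand q a 1 = (1-q^6)/u * ((1-q^3)/v)^2 * ((q*q-1)/(q*q))^2 * ((a*q*q-1)/(a*q*q)) * ((q*q-a)/(q*q))
      / (w^2 * (x/a) * y) * q^4"
    unfolding summand_def qint_def i power_int_of_nat qpoch_def
    by (simp add: e u_def[symmetric] v_def[symmetric] w_def[symmetric] y_def[symmetric])
  also have "\<dots> = (1-q^6)*(1-q^3)^2*(q*q-1)^2*(a*q*q-1)*(q*q-a)/(u*v^2*q^4*w^2*x*y)"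
    apply (simp add: field_simps n q_nonzero a_nonzero)
    apply algebra
    done
  finally show ?thesis by (simp add: u_def v_def w_def x_def y_def power2_eq_square)
qed

lemma rhs_prefactor_2: "rhs_prefactor q a 2 = a*(q*q-1)^2/(q^3*(1-q^4)^2*(1-a*q^4)*(a-q^4))"
proof -
  define u where "u = 1 - q^2"
  define w where "w = 1 - q^4"
  define s6 where "s6 = 1 - q^6"
  define s8 where "s8 = 1 - q^8"
  define p2 where "p2 = 1 + q^2"
  define p4 where "p4 = 1 + q^4"
  define x where "x = a - q^4"
  define y where "y = 1 - a*q^4"
  have n: "u \<noteq> 0" "w \<noteq> 0" "s6 \<noteq> 0" "s8 \<noteq> 0" "p2 \<noteq> 0" "p4 \<noteq> 0" "x \<noteq> 0" "y \<noteq> 0"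
    using one_minus_q_power_nonzero[of 2] one_minus_q_power_nonzero[of 4] one_minus_q_power_nonzero[of 6]
      one_minus_q_power_nonzero[of 8] one_plus_q_power_nonzero[of 2] one_plus_q_power_nonzero[of 4]
      a_minus_q_power_nonzero[of 4] one_minus_a_q_power_nonzero[of 4]
    by (auto simp: u_def w_def s6_def s8_def p2_def p4_def x_def y_def)
  have qp: "qpoch x p 1 = 1-x" "qpoch x p 2 = (1-x)*(1-x*p)" "qpoch x p 4 = (1-x)*(1-x*p)*(1-x*p^2)*(1-x*p^3)"
    for x p :: 'a
    by (simp_all add: qpoch_def numeral_eq_Suc)
  have f: "q^(2*2) = q^4" "qint (q^2) (int 2) = w/u" "qbinom (q^2) (2*2) 2 = (u*w*s6*s8)/((u*w)*(u*w))"
    "qpoch (q^6 / a) (q^4) (2 - 2) = 1" "qpoch (a*q^6) (q^4) (2 - 2) = 1" "1 - q^(4*2-2) = s6"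
    "qpoch (- (q^2)) (q^2) 2 = p2*p4" "qpoch (a * q^4) (q^4) (2 - 1) = y" "qpoch (q^4 / a) (q^4) (2 - 1) = x/a"
    unfolding qint_def qbinom_def power_int_of_nat
    using a_nonzero by (simp_all add: diff_divide_distrib qp qpoch_Suc
      u_def w_def s6_def s8_def p2_def p4_def x_def y_def flip: power_add power_mult)
  have "rhs_prefactor q a 2
      = q*(q^4+1)^2*(w/u)^2*((u*w*s6*s8)/((u*w)*(u*w)))^2*((1-inverse(q^2))^2*1*1)/(s6^2*(p2*p4)^4*y*(x/a))"
    unfolding rhs_prefactor_def f ..
  also have "\<dots> = a*(q*q-1)^2/(q^3*(1-q^4)^2*(1-a*q^4)*(a-q^4))"
    unfolding x_def[symmetric] y_def[symmetric] w_def[symmetric]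
    apply (simp add: field_simps n q_nonzero a_nonzero)
    apply (simp only: u_def w_def s6_def s8_def p2_def p4_def x_def y_def)
    apply algebra
    done
  finally show ?thesis .
qed

text \<open>The induction starts at \<open>n = 2\<close>: for \<open>n = 1\<close> the truncated index \<open>n - 2\<close> in
  \<open>rhs_prefactor\<close> makes it meaningless.\<close>
lemma summand_2: "summand q a 2 = rhs_prefactor q a 2 * summand_over_prefactor q a (q^(4*2))"
proof -
  have n: "1-q*q \<noteq> 0" "1-q \<noteq> 0" "1-q^4 \<noteq> 0" "a-q^4 \<noteq> 0" "1-a*q^4 \<noteq> 0"
    using one_minus_q_power_nonzero[of 2] one_minus_q_power_nonzero[of 1] one_minus_q_power_nonzero[of 4]
      a_minus_q_power_nonzero[of 4] one_minus_a_q_power_nonzero[of 4]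
    by (auto simp: power2_eq_square)
  have base: "summand q a 1 * rhs_prefactor_ratio q a (q^4) = rhs_prefactor q a 2 * summand_over_prefactor q a (q^4)"
    unfolding summand_1 rhs_prefactor_2 rhs_prefactor_ratio_def summand_over_prefactor_def times_divide_times_eq
    apply (subst frac_eq_eq)
    using n q_nonzero a_nonzero apply simp
    using n q_nonzero a_nonzero apply simp
    apply algebra
    done
  have ratio_nonzero: "rhs_prefactor_ratio q a (q^4) \<noteq> 0"
  proof -
    have "q*q - q^4 = q^2*(1-q^2)" "a*q*q - q^4 = q^2*(a-q^2)" "q*q - a*q^4 = q^2*(1-a*q^2)"
      by (simp_all add: algebra_simps power2_eq_square power_numeral_reduce)
    then show ?thesis unfolding rhs_prefactor_ratio_def
      using q_nonzero one_minus_q_power_nonzero[of 2] a_minus_q_power_nonzero[of 2]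
        one_minus_a_q_power_nonzero[of 2] q_power_4n_factors_nonzero[of 1]
      by simp
  qed
  have "summand q a 2 * rhs_prefactor_ratio q a (q^4)
      = summand q a 1 * rhs_prefactor_ratio q a (q^4) * summand_ratio q a (q^4)"
    using summand_Suc[of 1] by (simp add: numeral_2_eq_2 mult_ac)
  also have "\<dots> = rhs_prefactor q a 2 * (summand_over_prefactor q a (q^4) * summand_ratio q a (q^4))"
    unfolding base by (simp add: mult_ac)
  also have "\<dots> = rhs_prefactor q a 2 * summand_over_prefactor q a (q^(4*2)) * rhs_prefactor_ratio q a (q^4)"
    using summand_over_prefactor_Suc[of 1] by (simp add: mult_ac)
  finally show ?thesis using ratio_nonzero by simp
qed

lemma summand_eq_rhs_prefactor:
  "n \<ge> 2 \<Longrightarrow> summand q a n = rhs_prefactor q a n * summand_over_prefactor q a (q^(4*n))"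
proof (induction n rule: nat_induct_at_least)
  case base
  then show ?case by (rule summand_2)
next
  case (Suc n)
  have "summand q a (Suc n) = summand q a n * summand_ratio q a (q^(4*n))"
    using summand_Suc[of n] Suc by simp
  also have "\<dots> = rhs_prefactor q a n * rhs_prefactor_ratio q a (q^(4*n)) * summand_over_prefactor q a (q^(4*Suc n))"
    using Suc summand_over_prefactor_Suc[of n] by (simp add: mult.assoc)
  also have "\<dots> = rhs_prefactor q a (Suc n) * summand_over_prefactor q a (q^(4*Suc n))"
    using rhs_prefactor_Suc[OF Suc(1)] by simp
  finally show ?case .
qed

lemma partial_sum_2: "(\<Sum>k<2. summand q a k) = rhs_prefactor q a 2 * fpoly 2 a q"
proof -
  have n: "1-q*q \<noteq> 0" "1-q \<noteq> 0" "1-q^4 \<noteq> 0" "a-q^4 \<noteq> 0" "1-a*q^4 \<noteq> 0"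
    using one_minus_q_power_nonzero[of 2] one_minus_q_power_nonzero[of 1] one_minus_q_power_nonzero[of 4]
      a_minus_q_power_nonzero[of 4] one_minus_a_q_power_nonzero[of 4]
    by (auto simp: power2_eq_square)
  have sum: "(\<Sum>k<2. summand q a k) = summand q a 0 + summand q a 1"
    by (simp add: numeral_2_eq_2)
  have f: "fpoly 2 a q = f_numerator q a (q^8) 2 / (a*q^6*(1-q)^2)"
    using fpoly_eq_f_numerator[OF q_nonzero a_nonzero, of 2] n by (simp add: numeral_eq_Suc)
  have add_frac: "- 1/b + c/d = (c*b - d)/(b*d)" if "b \<noteq> 0" "d \<noteq> 0" for b c d :: 'a
    using that by (simp add: field_simps)
  show ?thesis
    unfolding sum summand_0 summand_1 rhs_prefactor_2 f
    apply (subst add_frac)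
    using n q_nonzero apply simp
    using n q_nonzero apply simp
    unfolding times_divide_times_eq
    apply (subst frac_eq_eq)
    using n q_nonzero a_nonzero apply simp
    using n q_nonzero a_nonzero apply simp
    unfolding f_numerator_def
    apply algebra
    done
qed

lemma partial_sum_eq: "n \<ge> 2 \<Longrightarrow> (\<Sum>k<n. summand q a k) = rhs_prefactor q a n * fpoly n a q"
proof (induction n rule: nat_induct_at_least)
  case base
  then show ?case by (rule partial_sum_2)
next
  case (Suc n)
  have "(\<Sum>k<Suc n. summand q a k) = rhs_prefactor q a n * fpoly n a q + summand q a n"
    using Suc by simp
  also have "\<dots> = rhs_prefactor q a n * (fpoly n a q + summand_over_prefactor q a (q^(4*n)))"
    using summand_eq_rhs_prefactor[OF Suc(1)] by (simp add: algebra_simps)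
  also have "\<dots> = rhs_prefactor q a (Suc n) * fpoly (Suc n) a q"
    using fpoly_Suc[OF Suc(1)] rhs_prefactor_Suc[OF Suc(1)] by simp
  finally show ?case .
qed

end

theorem theorem3:
  fixes q a :: "'a::field_char_0" and n :: nat
  assumes "n > 1"
    and "q \<noteq> 0" and "\<And>m::nat. m \<ge> 1 \<Longrightarrow> q ^ m \<noteq> 1"
    and "a \<noteq> 0" and "\<And>j::nat. a \<noteq> q ^ j" and "\<And>j::nat. a * q ^ j \<noteq> 1"
  shows "(\<Sum>k<n. qint (q^2) (4 * int k - 1) * (qint q (4 * int k - 1))^2
            * (qpoch (inverse (q^2)) (q^4) k)^2 * qpoch (inverse (q^2) / a) (q^4) k
            * qpoch (a * inverse (q^2)) (q^4) k
            / ((qpoch (q^4) (q^4) k)^2 * qpoch (q^4 / a) (q^4) k * qpoch (a * q^4) (q^4) k)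
            * q ^ (4 * k))
       = q * (q ^ (2 * n) + 1)^2 * (qint (q^2) (int n))^2 * (qbinom (q^2) (2 * n) n)^2
           * ((1 - inverse (q^2))^2 * qpoch (q^6 / a) (q^4) (n - 2) * qpoch (a * q^6) (q^4) (n - 2)
              * fpoly n a q)
           / ((1 - q ^ (4 * n - 2))^2 * (qpoch (- (q^2)) (q^2) n)^4 * qpoch (a * q^4) (q^4) (n - 1)
              * qpoch (q^4 / a) (q^4) (n - 1))"
proof -
  interpret generic_qa q a
    using assms(2-6) by unfold_locales auto
  have "(\<Sum>k<n. summand q a k) = rhs_prefactor q a n * fpoly n a q"
    using partial_sum_eq assms(1) by simp
  moreover have "x * (y * f) / d = (x * y / d) * f" for x y f d :: 'a
    by (simp add: divide_inverse mult_ac)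
  ultimately show ?thesis
    unfolding summand_def rhs_prefactor_def mult.assoc[symmetric] by (simp only: mult.assoc)
qed

end
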